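(* Fix $\varepsilon>0$ and an integer $r\ge100$ with $\frac{3r-1}{r-1}\left(\frac27-\frac\varepsilon2\right)<\frac67-\varepsilon$. Let $n^{0.99}<t<n$, let $\mathcal S$ be a $t$-intersecting family of partial permutations each of size at most $q$ ($t\le q\le n$) with peeling families $\mathcal T_k,\mathcal W_k$, let $k$ be an integer with $1\le k\le \min(q-t,t^{2/7-\varepsilon/2})$, and let $A_1,\dots,A_r\in\mathcal W_k$ satisfy $|A_1\cap\cdots\cap A_r|=t-(r-2)k$. For $0\le j\le k$ let $\mathcal G_j=\{T\in\mathcal T_k: |T|=t+j\}$ (so $\mathcal G_k=\mathcal W_k$). (a) There exist $t_0,k_0$ depending only on $\varepsilon$ (and $r$) such that if $t>t_0$ and $k>k_0$, then for every $0\le j\le k-1$, $|\mathcal G_j|\le t^{-0.1}\,2^{j-k}\binom tj$. (b) For every $\eta>0$ there exist $t_0,k_0$ (depending on $\varepsilon,r,\eta$) such that if $t>t_0$ and $k>k_0$, then $|\mathcal W_k|\le(1+\eta)\binom tk$, and the number of members of $\mathcal W_k$ not contained in $A_1\cup\cdots\cup A_r$ is at most $\eta\binom tk$.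
   Context: Each permutation $\sigma$ of $[n]$ is identified with the set $\{(i,\sigma(i)):i\in[n]\}\subseteq[n]^2$; a partial permutation is a subset of such a set. A family is $t$-intersecting if any two (not necessarily distinct) members $A,B$ have $|A\cap B|\ge t$. A simplification of a $t$-intersecting family is any family obtained by repeatedly applying, in any order, the following operations until neither applies: (i) delete a member that is contained in another, different member; (ii) replace a member $S$ by a proper subset $X\subsetneq S$ provided the resulting family is still $t$-intersecting. Peeling: $\mathcal T_{q-t}$ is a simplification of $\mathcal S$, and for $k=q-t,q-t-1,\dots,1$, $\mathcal W_k=\{T\in\mathcal T_k:|T|=t+k\}$ and $\mathcal T_{k-1}$ is a simplification of $\mathcal T_k\setminus\mathcal W_k$ (any choices of simplifications are allowed). *)

theory Defs
  imports Complex_Main "HOL-Combinatorics.Permutations"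
begin

type_synonym pperm = "(nat \<times> nat) set"

definition partial_perm :: "nat \<Rightarrow> pperm \<Rightarrow> bool" where
  "partial_perm n P \<longleftrightarrow>
     (\<exists>\<sigma>. \<sigma> permutes {1..n} \<and> P \<subseteq> {(i, \<sigma> i) | i. i \<in> {1..n}})"

definition t_intersecting :: "nat \<Rightarrow> 'a set set \<Rightarrow> bool" where
  "t_intersecting t F \<longleftrightarrow> (\<forall>A\<in>F. \<forall>B\<in>F. t \<le> card (A \<inter> B))"

definition simp_step :: "nat \<Rightarrow> 'a set set \<Rightarrow> 'a set set \<Rightarrow> bool" where
  "simp_step t F G \<longleftrightarrow>
     (\<exists>A B. A \<in> F \<and> B \<in> F \<and> A \<noteq> B \<and> A \<subseteq> B \<and> G = F - {A}) \<or>
     (\<exists>S X. S \<in> F \<and> X \<subset> S \<and> G = insert X (F - {S}) \<and> t_intersecting t G)"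

definition simplification :: "nat \<Rightarrow> 'a set set \<Rightarrow> 'a set set \<Rightarrow> bool" where
  "simplification t F G \<longleftrightarrow> (simp_step t)\<^sup>*\<^sup>* F G \<and> \<not> (\<exists>H. simp_step t G H)"

definition Wfam :: "nat \<Rightarrow> (nat \<Rightarrow> 'a set set) \<Rightarrow> nat \<Rightarrow> 'a set set" where
  "Wfam t T k = {X \<in> T k. card X = t + k}"

definition peeling :: "nat \<Rightarrow> nat \<Rightarrow> 'a set set \<Rightarrow> (nat \<Rightarrow> 'a set set) \<Rightarrow> bool" where
  "peeling t q S T \<longleftrightarrow>
     simplification t S (T (q - t)) \<and>
     (\<forall>k\<in>{1..q - t}. simplification t (T k - Wfam t T k) (T (k - 1)))"

end

theory Submission
  imports Defs "HOL-Real_Asymp.Real_Asymp"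
begin

text \<open>Write \<open>C\<close> and \<open>U\<close> for the intersection and the union of \<open>A\<^sub>1, ..., A\<^sub>r\<close>.
  Members of \<open>T\<^sub>k\<close> pairwise share \<open>t\<close> points, so \<open>|A\<^sub>i - A\<^sub>l| \<le> k\<close>, and the union
  bound gives \<open>|C| \<ge> t - (r - 2) k\<close>. Equality forces every point of \<open>U - C\<close> to miss
  exactly one \<open>A\<^sub>i\<close>, whence \<open>|U - C| = r k\<close> and \<open>|U| = t + 2 k\<close>.

  A member \<open>Y\<close> of \<open>T\<^sub>k\<close> of size \<open>t + j\<close> is determined by \<open>C - Y\<close>, \<open>U - C - Y\<close> and
  \<open>Y - U\<close>. If the first two have \<open>a\<close> and \<open>b\<close> elements, the third has \<open>a + b + j - 2 k\<close>,
  and summing \<open>|A\<^sub>i - Y| \<le> k\<close> over \<open>i\<close> gives \<open>r (a + b) \<le> r k + b\<close>. Counting the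
  triples, the pair \<open>(a, b)\<close> contributes at most \<open>(t choose j) \<rho>\<^sup>b \<kappa>\<^bsup>a + b - k\<^esup>\<close> members,
  where \<open>\<rho> = r k\<^sup>2 / (t - k) = O(t\<^bsup>-3/7\<^esup>)\<close> and \<open>\<kappa> = n\<^sup>2 (t - k) / k \<le> t\<^sup>4\<close>. As
  \<open>b \<ge> r (a + b - k)\<close>, a pair with \<open>a + b > k\<close> pays a factor \<open>\<rho>\<^sup>r \<kappa> = O(t\<^bsup>-38\<^esup>)\<close>
  (using \<open>r \<ge> 100\<close>) per unit of \<open>a + b - k\<close>, which beats the \<open>O(t\<^sup>2)\<close> number of
  pairs. The pairs with \<open>a + b = k\<close> occur only for \<open>j = k\<close>, correspond to members inside
  \<open>U\<close>, and contribute at most \<open>(t choose k) (1 + k \<rho>)\<close>, where \<open>k \<rho> = O(t\<^bsup>-1/7\<^esup>)\<close>.\<close>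

section \<open>Simplification and peeling\<close>

lemma simp_step_preserves:
  assumes "simp_step t F G" and "t_intersecting t F"
  shows "t_intersecting t G \<and> \<Union>G \<subseteq> \<Union>F"
  using assms unfolding simp_step_def t_intersecting_def by blast

lemma simp_steps_preserve:
  assumes "(simp_step t)\<^sup>*\<^sup>* F G" and "t_intersecting t F"
  shows "t_intersecting t G \<and> \<Union>G \<subseteq> \<Union>F"
  using assms
proof (induction rule: rtranclp_induct)
  case (step G H)
  then show ?case using simp_step_preserves by blast
qed simp

lemma t_intersecting_Diff:
  "t_intersecting t F \<Longrightarrow> t_intersecting t (F - G)"
  unfolding t_intersecting_def by blast

lemma peeling_preserves:
  assumes peel: "peeling t q S T" and S: "t_intersecting t S" and k: "k \<le> q - t"
  shows "t_intersecting t (T k) \<and> \<Union>(T k) \<subseteq> \<Union>S"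
  using k
proof (induction k rule: inc_induct)
  case base
  show ?case
    using peel simp_steps_preserve[OF _ S] unfolding peeling_def simplification_def by blast
next
  case (step m)
  have "Suc m \<in> {1..q - t}" using step.hyps by simp
  with peel have "simplification t (T (Suc m) - Wfam t T (Suc m)) (T m)"
    unfolding peeling_def by (metis diff_Suc_1)
  then show ?case
    using simp_steps_preserve[OF _ t_intersecting_Diff] step.IH
    unfolding simplification_def by blast
qed

lemma card_grid: "card ({1..n} \<times> {1..n}) = n ^ 2"
  by (simp add: card_cartesian_product power2_eq_square)

lemma partial_perm_subset_grid:
  assumes "partial_perm n P"
  shows "P \<subseteq> {1..n} \<times> {1..n}"
  using assms permutes_in_image unfolding partial_perm_def by fastforce

section \<open>Tight families\<close>

lemma card_UN_less_sum:
  assumes "finite J" "\<And>i. i \<in> J \<Longrightarrow> finite (B i)"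
    and "p \<in> J" "q \<in> J" "p \<noteq> q" "x \<in> B p" "x \<in> B q"
  shows "card (\<Union>i\<in>J. B i) < (\<Sum>i\<in>J. card (B i))"
proof -
  let ?R = "\<Union>i\<in>J - {p}. B i"
  have fin: "finite (B p)" "finite ?R" using assms(1-3) by auto
  have "x \<in> B p \<inter> ?R" using assms(4-7) by blast
  then have "0 < card (B p \<inter> ?R)" using fin by (auto simp: card_gt_0_iff)
  moreover have "card (B p \<union> ?R) + card (B p \<inter> ?R) = card (B p) + card ?R"
    using card_Un_Int[OF fin] by simp
  moreover have "card ?R \<le> (\<Sum>i\<in>J - {p}. card (B i))"
    using assms(1) by (intro card_UN_le) simp
  moreover have "card (\<Union>i\<in>J. B i) = card (B p \<union> ?R)"
    using assms(3) by (metis insert_Diff UN_insert)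
  moreover have "(\<Sum>i\<in>J. card (B i)) = card (B p) + (\<Sum>i\<in>J - {p}. card (B i))"
    using assms(1,3) by (simp add: sum.remove)
  ultimately show ?thesis by linarith
qed

lemma card_Diff_le_of_card_Int:
  assumes "finite A" "card A = t + k" "t \<le> card (A \<inter> B)"
  shows "card (A - B) \<le> k"
  using card_Int_Diff[OF assms(1), of B] assms(2,3) by linarith

locale tight_family =
  fixes I :: "'i set" and A :: "'i \<Rightarrow> 'a set" and t k :: nat
  assumes finite_index: "finite I"
    and two_le_card_index: "2 \<le> card I"
    and finite_member: "i \<in> I \<Longrightarrow> finite (A i)"
    and card_member: "i \<in> I \<Longrightarrow> card (A i) = t + k"
    and card_Int_members: "i \<in> I \<Longrightarrow> l \<in> I \<Longrightarrow> t \<le> card (A i \<inter> A l)"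
    and card_core: "card (\<Inter>i\<in>I. A i) + (card I - 2) * k = t"
begin

abbreviation core :: "'a set" where "core \<equiv> \<Inter>i\<in>I. A i"
abbreviation support :: "'a set" where "support \<equiv> \<Union>i\<in>I. A i"

lemma card_core_le: "card core \<le> t"
  using card_core by simp

lemma core_subset_support: "core \<subseteq> support"
proof -
  have "I \<noteq> {}" using two_le_card_index by auto
  then show ?thesis by blast
qed

lemma finite_support: "finite support"
  using finite_index finite_member by blast

lemma card_Diff_members: "i \<in> I \<Longrightarrow> l \<in> I \<Longrightarrow> card (A i - A l) \<le> k"
  by (rule card_Diff_le_of_card_Int[OF finite_member card_member card_Int_members])

lemma card_member_Diff_core:
  assumes "i \<in> I"
  shows "card (A i - core) = (card I - 1) * k"
proof -
  have "card (A i - core) = card (A i) - card core"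
    using assms finite_member by (intro card_Diff_subset) (auto intro: finite_subset)
  moreover obtain s where "card I = Suc (Suc s)"
    using two_le_card_index by (metis add_2_eq_Suc le_Suc_ex)
  ultimately show ?thesis
    using card_member[OF assms] card_core by simp
qed

lemma missing_member_unique:
  assumes "x \<in> support" "p \<in> I" "q \<in> I" "x \<notin> A p" "x \<notin> A q"
  shows "p = q"
proof (rule ccontr)
  assume "p \<noteq> q"
  obtain l where l: "l \<in> I" "x \<in> A l" using assms(1) by blast
  have "A l - core = (\<Union>i\<in>I - {l}. A l - A i)" by blast
  also have "card \<dots> < (\<Sum>i\<in>I - {l}. card (A l - A i))"
    using \<open>p \<noteq> q\<close> assms(2-5) l finite_index finite_member
    by (intro card_UN_less_sum[where x = x and p = p and q = q]) auto
  also have "\<dots> \<le> (\<Sum>i\<in>I - {l}. k)"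
    using l card_Diff_members by (intro sum_mono) auto
  also have "\<dots> = (card I - 1) * k"
    using l finite_index by simp
  finally show False
    using card_member_Diff_core[OF l(1)] by simp
qed

lemma sum_card_Diff_members:
  assumes "Q \<subseteq> support - core" "finite Q"
  shows "(\<Sum>i\<in>I. card (Q - A i)) = card Q"
proof -
  have "(\<Sum>i\<in>I. card (Q - A i)) = card (\<Union>i\<in>I. Q - A i)"
  proof (rule card_UN_disjoint[symmetric, OF finite_index])
    show "\<forall>i\<in>I. \<forall>l\<in>I. i \<noteq> l \<longrightarrow> (Q - A i) \<inter> (Q - A l) = {}"
      using missing_member_unique assms(1) by blast
  qed (use assms(2) in simp)
  also have "(\<Union>i\<in>I. Q - A i) = Q" using assms(1) by blast
  finally show ?thesis .
qed

text \<open>The sets \<open>support - A i\<close> partition \<open>support - core\<close>, and each of them has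
  \<open>card (support - core) - (card I - 1) * k\<close> elements.\<close>
lemma card_support_Diff_core: "card (support - core) = card I * k"
proof -
  define D where "D = card (support - core)"
  note fin = finite_support
  have part: "D = (card I - 1) * k + card (support - A i)" if i: "i \<in> I" for i
  proof -
    have "support - core = (A i - core) \<union> (support - A i)" using i by blast
    then have "D = card ((A i - core) \<union> (support - A i))" unfolding D_def by simp
    also have "\<dots> = card (A i - core) + card (support - A i)"
      using fin finite_member[OF i] by (intro card_Un_disjoint) auto
    finally show ?thesis using card_member_Diff_core[OF i] by simp
  qed
  have "support - A i = (support - core) - A i" if "i \<in> I" for i using that by blast
  then have D_sum: "(\<Sum>i\<in>I. card (support - A i)) = D"
    unfolding D_def using sum_card_Diff_members[of "support - core"] fin by simp
  have "card I * D = (\<Sum>i\<in>I. D)" by simp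
  also have "\<dots> = (\<Sum>i\<in>I. (card I - 1) * k + card (support - A i))"
    using part by (rule sum.cong[OF refl])
  also have "\<dots> = card I * ((card I - 1) * k) + D"
    by (simp add: sum.distrib D_sum)
  finally have "(card I - 1) * D = (card I - 1) * (card I * k)"
    using two_le_card_index by (simp add: algebra_simps diff_mult_distrib)
  then show ?thesis
    unfolding D_def using two_le_card_index by simp
qed

lemma card_support: "card support = t + 2 * k"
proof -
  have "card support = card core + card (support - core)"
    using core_subset_support finite_support
    by (metis card_Diff_subset card_mono finite_subset le_add_diff_inverse)
  moreover obtain s where "card I = Suc (Suc s)"
    using two_le_card_index by (metis add_2_eq_Suc le_Suc_ex)
  ultimately show ?thesis
    using card_support_Diff_core card_core by simp
qed

end

section \<open>Counting members by their deficit pairs\<close>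

lemma card_subsets_by_profile:
  assumes "finite G" "C \<subseteq> U" "U \<subseteq> G"
  shows "card {Y. Y \<subseteq> G \<and> card (C - Y) = a \<and> card (U - C - Y) = b \<and> card (Y - U) = d}
       = (card C choose a) * (card (U - C) choose b) * (card (G - U) choose d)"
proof -
  let ?sub = "\<lambda>X m. {Z. Z \<subseteq> X \<and> card Z = m}"
  let ?Y = "{Y. Y \<subseteq> G \<and> card (C - Y) = a \<and> card (U - C - Y) = b \<and> card (Y - U) = d}"
  have "bij_betw (\<lambda>Y. (C - Y, U - C - Y, Y - U)) ?Y (?sub C a \<times> ?sub (U - C) b \<times> ?sub (G - U) d)"
    by (rule bij_betw_byWitness[where f' = "\<lambda>(X\<^sub>1, X\<^sub>2, X\<^sub>3). (U - X\<^sub>1 - X\<^sub>2) \<union> X\<^sub>3"])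
      (use assms(2,3) in \<open>auto intro!: arg_cong[where f = card]\<close>)
  then have "card ?Y = card (?sub C a \<times> ?sub (U - C) b \<times> ?sub (G - U) d)"
    by (rule bij_betw_same_card)
  also have "\<dots> = (card C choose a) * (card (U - C) choose b) * (card (G - U) choose d)"
    using assms by (simp add: card_cartesian_product n_subsets finite_subset)
  finally show ?thesis .
qed

text \<open>For a member \<open>Y\<close>, \<open>a = card (core - Y)\<close> and \<open>b = card (support - core - Y)\<close>;
  \<open>m\<close> is a lower bound for \<open>card (Y - support)\<close>.\<close>
definition deficit_pairs :: "nat \<Rightarrow> nat \<Rightarrow> nat \<Rightarrow> nat \<Rightarrow> nat \<Rightarrow> (nat \<times> nat) set" where
  "deficit_pairs c r k j m =
     {(a, b). a \<le> c \<and> b \<le> r * k \<and> r * (a + b) \<le> r * k + b \<and> 2 * k + m \<le> a + b + j}"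

lemma deficit_pairs_subset: "deficit_pairs c r k j m \<subseteq> {0..c} \<times> {0..r * k}"
  unfolding deficit_pairs_def by auto

lemma finite_deficit_pairs: "finite (deficit_pairs c r k j m)"
  using deficit_pairs_subset by (rule finite_subset) simp

lemma card_deficit_pairs_le: "card (deficit_pairs c r k j m) \<le> (c + 1) * (r * k + 1)"
  using card_mono[OF _ deficit_pairs_subset] by (simp add: card_cartesian_product)

lemma card_deficit_pairs_le_square:
  assumes "c \<le> t" "k \<le> t" "1 \<le> t" "1 \<le> r"
  shows "card (deficit_pairs c r k j m) \<le> 4 * r * t ^ 2"
proof -
  have "card (deficit_pairs c r k j m) \<le> (c + 1) * (r * k + 1)"
    by (rule card_deficit_pairs_le)
  also have "\<dots> \<le> (2 * t) * (2 * r * t)"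
  proof (intro mult_mono)
    have "r * k \<le> r * t" "1 \<le> r * t" using assms by simp_all
    then show "r * k + 1 \<le> 2 * r * t" by linarith
  qed (use assms in auto)
  finally show ?thesis by (simp add: power2_eq_square mult_ac)
qed

definition deficit_sum :: "nat \<Rightarrow> nat \<Rightarrow> nat \<Rightarrow> nat \<Rightarrow> nat \<Rightarrow> nat \<Rightarrow> nat" where
  "deficit_sum c N r k j m = (\<Sum>(a, b)\<in>deficit_pairs c r k j m.
     (c choose a) * ((r * k) choose b) * (N choose (a + b + j - 2 * k)))"

context tight_family
begin

lemma card_Diff_support:
  assumes "finite Y" "card Y = t + j"
  shows "card (Y - support) + 2 * k = card (core - Y) + card (support - core - Y) + j"
proof -
  have split: "support - Y = (core - Y) \<union> (support - core - Y)"
    using core_subset_support by blast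
  have "card (support - Y) = card (core - Y) + card (support - core - Y)"
    unfolding split using finite_support core_subset_support
    by (intro card_Un_disjoint) (auto intro: finite_subset)
  moreover have "card support = card (support \<inter> Y) + card (support - Y)"
    using finite_support by (rule card_Int_Diff)
  moreover have "card Y = card (support \<inter> Y) + card (Y - support)"
    using card_Int_Diff[OF assms(1), of support] by (simp add: Int_commute)
  ultimately show ?thesis
    using card_support assms(2) by linarith
qed

lemma deficit_pair_of_member:
  assumes Y: "finite Y" "card Y = t + j" "\<forall>i\<in>I. t \<le> card (Y \<inter> A i)"
    and m: "m \<le> card (Y - support)"
  shows "(card (core - Y), card (support - core - Y)) \<in> deficit_pairs (card core) (card I) k j m"
    and "card (Y - support) = card (core - Y) + card (support - core - Y) + j - 2 * k"
proof -
  define Q where "Q = support - core - Y"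
  define a where "a = card (core - Y)"
  define b where "b = card Q"
  note fin = finite_support
  have fin_core: "finite core" using core_subset_support fin by (rule finite_subset)
  have d: "card (Y - support) + 2 * k = a + b + j"
    unfolding a_def b_def Q_def using card_Diff_support[OF Y(1,2)] .
  have "a + b \<le> k + card (Q - A i)" if i: "i \<in> I" for i
  proof -
    have "card (A i - Y) \<le> k"
      using card_Diff_le_of_card_Int[OF finite_member card_member] i Y(3) by (simp add: Int_commute)
    moreover have "A i - Y = (core - Y) \<union> (Q \<inter> A i)"
      unfolding Q_def using i by blast
    moreover have "card ((core - Y) \<union> (Q \<inter> A i)) = a + card (Q \<inter> A i)"
      unfolding a_def Q_def using fin fin_core by (intro card_Un_disjoint) auto
    moreover have "b = card (Q \<inter> A i) + card (Q - A i)"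
      unfolding b_def Q_def using fin by (simp add: card_Int_Diff)
    ultimately show ?thesis by simp
  qed
  then have "card I * (a + b) \<le> (\<Sum>i\<in>I. k + card (Q - A i))"
    using sum_mono[of I "\<lambda>_. a + b"] by simp
  also have "\<dots> = card I * k + b"
    unfolding b_def using sum_card_Diff_members[of Q] fin by (simp add: sum.distrib Q_def)
  finally have "card I * (a + b) \<le> card I * k + b" .
  moreover have "a \<le> card core"
    unfolding a_def using fin_core by (simp add: card_mono)
  moreover have "b \<le> card I * k"
    unfolding b_def Q_def using fin
    by (metis card_support_Diff_core card_mono finite_Diff Diff_subset)
  ultimately show "(a, b) \<in> deficit_pairs (card core) (card I) k j m"
    using d m unfolding deficit_pairs_def by simp
  show "card (Y - support) = a + b + j - 2 * k" using d by simp
qed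

lemma card_family_le:
  assumes G: "finite G" "support \<subseteq> G"
    and F: "\<And>Y. Y \<in> F \<Longrightarrow>
      Y \<subseteq> G \<and> card Y = t + j \<and> (\<forall>i\<in>I. t \<le> card (Y \<inter> A i)) \<and> m \<le> card (Y - support)"
  shows "card F \<le> deficit_sum (card core) (card (G - support)) (card I) k j m"
proof -
  define R where "R = deficit_pairs (card core) (card I) k j m"
  define P where "P = (\<lambda>(a, b). {Y. Y \<subseteq> G \<and> card (core - Y) = a \<and> card (support - core - Y) = b
      \<and> card (Y - support) = a + b + j - 2 * k})"
  have "F \<subseteq> (\<Union>p\<in>R. P p)"
  proof
    fix Y assume "Y \<in> F"
    then have "Y \<subseteq> G" "finite Y" "card Y = t + j" "\<forall>i\<in>I. t \<le> card (Y \<inter> A i)"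
      "m \<le> card (Y - support)"
      using F G(1) finite_subset by blast+
    from deficit_pair_of_member[OF this(2-)] this(1) show "Y \<in> (\<Union>p\<in>R. P p)"
      unfolding R_def P_def by blast
  qed
  moreover have "finite (P p)" for p
    using G(1) unfolding P_def by (auto split: prod.splits intro: finite_subset[of _ "Pow G"])
  ultimately have "card F \<le> card (\<Union>p\<in>R. P p)"
    unfolding R_def by (intro card_mono) (auto simp: finite_deficit_pairs)
  also have "\<dots> \<le> (\<Sum>p\<in>R. card (P p))"
    by (rule card_UN_le) (simp add: R_def finite_deficit_pairs)
  also have "\<dots> = (\<Sum>(a, b)\<in>R.
      (card core choose a) * ((card I * k) choose b)
        * (card (G - support) choose (a + b + j - 2 * k)))"
    unfolding P_def using G core_subset_support
    by (intro sum.cong) (auto simp: card_subsets_by_profile card_support_Diff_core)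
  finally show ?thesis unfolding R_def deficit_sum_def .
qed

end

section \<open>Estimating the deficit sums\<close>

lemma binomial_mult_diff_pow_le:
  fixes t a m k :: nat
  assumes "a + m \<le> k" "k \<le> t"
  shows "(t choose a) * (t - k) ^ m \<le> (t choose (a + m)) * k ^ m"
  using assms(1)
proof (induction m)
  case (Suc m)
  let ?i = "a + m"
  have step: "(t choose ?i) * (t - ?i) = (t choose Suc ?i) * Suc ?i"
    using binomial_absorption[of ?i t] binomial_absorb_comp[of t ?i] by (simp add: mult.commute)
  have IH: "(t choose a) * (t - k) ^ m \<le> (t choose ?i) * k ^ m"
    using Suc by simp
  have "(t choose a) * (t - k) ^ Suc m = (t choose a) * (t - k) ^ m * (t - k)" by simp
  also have "\<dots> \<le> (t choose ?i) * k ^ m * (t - k)"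
    using IH by (rule mult_right_mono) simp
  also have "\<dots> \<le> (t choose ?i) * (t - ?i) * k ^ m"
    using Suc.prems assms(2) by (simp add: mult.commute mult.left_commute mult_left_mono)
  also have "\<dots> = (t choose Suc ?i) * Suc ?i * k ^ m" by (simp only: step)
  also have "\<dots> \<le> (t choose Suc ?i) * k * k ^ m"
    using Suc.prems by (intro mult_right_mono mult_left_mono) simp_all
  finally show ?case by (simp add: mult.assoc)
qed simp

lemma binomial_le_binomial_mult_ratio_pow:
  fixes t a j k :: nat
  assumes "a \<le> j" "j \<le> k" "k < t"
  shows "real (t choose a) \<le> real (t choose j) * (real k / real (t - k)) ^ (j - a)"
proof -
  have "(t choose a) * (t - k) ^ (j - a) \<le> (t choose j) * k ^ (j - a)"
    using binomial_mult_diff_pow_le[of a "j - a" k t] assms by simp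
  then have "real (t choose a) * real (t - k) ^ (j - a) \<le> real (t choose j) * real k ^ (j - a)"
    by (simp only: of_nat_le_iff of_nat_mult of_nat_power flip: of_nat_mult of_nat_power)
  moreover have "0 < real (t - k)" using assms by simp
  ultimately show ?thesis by (simp add: power_divide field_simps)
qed

lemma choose_le_pow: "n choose k \<le> n ^ k"
  using binomial_fact_pow[of n k] fact_ge_1[where 'a = nat, of k]
  by (metis dual_order.trans mult_le_mono2 mult.right_neutral)

lemma power_regroup_le:
  fixes q P M :: real and x b d e :: nat
  assumes "0 < q" "0 \<le> P" "1 \<le> q * M" "x + 2 * e = b + d" "d \<le> e"
  shows "q ^ x * P ^ b * M ^ d \<le> (q * P) ^ b * (M / q) ^ e"
proof -
  have "q ^ x * P ^ b * M ^ d * q ^ (2 * e) = (q * P) ^ b * (q * M) ^ d"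
    using assms(4) by (simp add: power_mult_distrib power_add[symmetric] mult_ac)
  also have "\<dots> \<le> (q * P) ^ b * (q * M) ^ e"
    using assms by (intro mult_left_mono power_increasing) auto
  also have "\<dots> = (q * P) ^ b * (M / q) ^ e * q ^ (2 * e)"
    using assms(1)
    by (simp add: power_mult_distrib power_divide power_mult field_simps power2_eq_square)
  finally show ?thesis
    using assms(1) by (simp add: mult_le_cancel_right_pos)
qed

text \<open>The factors \<open>\<rho>\<close> and \<open>\<kappa>\<close> of the outline at the top.\<close>
definition miss_factor :: "nat \<Rightarrow> nat \<Rightarrow> nat \<Rightarrow> real" where
  "miss_factor r k t = real r * real k ^ 2 / real (t - k)"

definition escape_factor :: "nat \<Rightarrow> nat \<Rightarrow> nat \<Rightarrow> real" where
  "escape_factor n k t = real n ^ 2 * real (t - k) / real k"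

lemma deficit_term_le:
  fixes a b c j k m n r t N :: nat
  assumes ab: "(a, b) \<in> deficit_pairs c r k j m"
    and "c \<le> t" "N \<le> n ^ 2" "2 \<le> r" "j \<le> k" "0 < k" "k < t" "t - k \<le> k * n ^ 2"
  shows "real ((c choose a) * ((r * k) choose b) * (N choose (a + b + j - 2 * k)))
    \<le> real (t choose j) * miss_factor r k t ^ b * escape_factor n k t ^ (a + b - k)"
proof -
  define e where "e = a + b - k"
  define d where "d = a + b + j - 2 * k"
  define q where "q = real k / real (t - k)"
  have r_ab: "r * (a + b) \<le> r * k + b" and "2 * k \<le> a + b + j"
    using ab unfolding deficit_pairs_def by auto
  then have "a + b = k + e" "d + k = j + e" unfolding d_def e_def using assms(5) by auto
  moreover have "r * e \<le> b" using r_ab \<open>a + b = k + e\<close> by (simp add: algebra_simps)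
  then have "2 * e \<le> b" using assms(4) by (meson le_trans mult_le_mono1)
  ultimately have "a \<le> j" "(j - a) + 2 * e = b + d" "d \<le> e" using assms(5) by linarith+
  have q_pos: "0 < q" unfolding q_def using assms(6,7) by simp
  have "real (t - k) \<le> real k * real n ^ 2"
    using assms(8) by (metis of_nat_le_iff of_nat_mult of_nat_power)
  then have q_n: "1 \<le> q * real n ^ 2" unfolding q_def using assms(7) by (simp add: field_simps)
  have "real (c choose a) \<le> real (t choose j) * q ^ (j - a)"
    using binomial_right_mono[OF assms(2), of a] binomial_le_binomial_mult_ratio_pow[of a j k t]
      \<open>a \<le> j\<close> assms(5,7) unfolding q_def by (meson of_nat_le_iff order_trans)
  moreover have "real ((r * k) choose b) \<le> real ((r * k) ^ b)"
    by (simp only: of_nat_le_iff choose_le_pow)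
  moreover have "real (N choose d) \<le> real ((n ^ 2) ^ d)"
    using choose_le_pow[of N d] power_mono[OF assms(3), of d] by (simp only: of_nat_le_iff) simp
  ultimately have "real ((c choose a) * ((r * k) choose b) * (N choose d))
      \<le> real (t choose j) * q ^ (j - a) * (real r * real k) ^ b * (real n ^ 2) ^ d"
    unfolding of_nat_mult of_nat_power using q_pos by (intro mult_mono) auto
  also have "\<dots> \<le> real (t choose j) * ((q * (real r * real k)) ^ b * (real n ^ 2 / q) ^ e)"
    using power_regroup_le[OF q_pos _ q_n] \<open>(j - a) + 2 * e = b + d\<close> \<open>d \<le> e\<close>
    unfolding mult.assoc by (intro mult_left_mono) auto
  also have "q * (real r * real k) = miss_factor r k t"
    unfolding q_def miss_factor_def by (simp add: power2_eq_square)
  also have "real n ^ 2 / q = escape_factor n k t"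
    unfolding q_def escape_factor_def by simp
  finally show ?thesis
    unfolding d_def e_def by (simp only: mult.assoc)
qed

lemma miss_factor_nonneg: "0 \<le> miss_factor r k t"
  unfolding miss_factor_def by simp

lemma escape_factor_nonneg: "0 \<le> escape_factor n k t"
  unfolding escape_factor_def by simp

lemma deficit_term_le_excess_pow:
  fixes a b c j k m n r t N :: nat
  assumes ab: "(a, b) \<in> deficit_pairs c r k j m"
    and "c \<le> t" "N \<le> n ^ 2" "2 \<le> r" "j \<le> k" "0 < k" "k < t" "t - k \<le> k * n ^ 2"
    and "miss_factor r k t \<le> 1"
  shows "real ((c choose a) * ((r * k) choose b) * (N choose (a + b + j - 2 * k)))
    \<le> real (t choose j) * (miss_factor r k t ^ r * escape_factor n k t) ^ (a + b - k)"
proof -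
  have "r * (a + b) \<le> r * k + b" "2 * k \<le> a + b + j"
    using ab unfolding deficit_pairs_def by auto
  then have "r * (a + b - k) \<le> b" using assms(6) by (simp add: diff_mult_distrib2)
  then have "miss_factor r k t ^ b \<le> (miss_factor r k t ^ r) ^ (a + b - k)"
    unfolding power_mult[symmetric] by (rule power_decreasing[OF _ miss_factor_nonneg assms(9)])
  then have "real (t choose j) * miss_factor r k t ^ b * escape_factor n k t ^ (a + b - k)
      \<le> real (t choose j) * (miss_factor r k t ^ r) ^ (a + b - k)
        * escape_factor n k t ^ (a + b - k)"
    by (intro mult_right_mono mult_left_mono) (simp_all add: escape_factor_nonneg)
  with deficit_term_le[OF ab assms(2-8)] show ?thesis
    by (simp add: power_mult_distrib mult.assoc)
qed

lemma power_le_twice_half_pow: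
  fixes \<theta> :: real
  assumes "0 \<le> \<theta>" "\<theta> \<le> 1/2" "1 \<le> e" "l \<le> e"
  shows "\<theta> ^ e \<le> 2 * \<theta> * (1/2) ^ l"
proof -
  have "\<theta> ^ e = \<theta> * \<theta> ^ (e - 1)" using assms(3) by (simp add: power_eq_if)
  also have "\<dots> \<le> \<theta> * (1/2) ^ (e - 1)"
    using assms(1,2) by (intro mult_left_mono power_mono) auto
  also have "\<dots> = 2 * \<theta> * (1/2) ^ e" using assms(3) by (simp add: power_eq_if)
  also have "\<dots> \<le> 2 * \<theta> * (1/2) ^ l"
    using assms(1,4) by (intro mult_left_mono power_decreasing) auto
  finally show ?thesis .
qed

lemma deficit_sum_excess_le:
  fixes c j k m n r t N :: nat and \<theta> :: real
  assumes "c \<le> t" "N \<le> n ^ 2" "2 \<le> r" "j \<le> k" "0 < k" "k < t" "t - k \<le> k * n ^ 2"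
    and "j < k \<or> 0 < m"
    and "miss_factor r k t \<le> 1" "miss_factor r k t ^ r * escape_factor n k t \<le> \<theta>" "\<theta> \<le> 1/2"
  shows "real (deficit_sum c N r k j m)
    \<le> real (card (deficit_pairs c r k j m)) * (real (t choose j) * (2 * \<theta> * (1/2) ^ (k - j)))"
proof -
  have \<theta>: "0 \<le> \<theta>"
    using assms(10) miss_factor_nonneg escape_factor_nonneg
    by (meson order_trans zero_le_mult_iff zero_le_power)
  have "real ((c choose a) * ((r * k) choose b) * (N choose (a + b + j - 2 * k)))
      \<le> real (t choose j) * (2 * \<theta> * (1/2) ^ (k - j))"
    if ab: "(a, b) \<in> deficit_pairs c r k j m" for a b
  proof -
    have "2 * k + m \<le> a + b + j" using ab unfolding deficit_pairs_def by simp
    then have e: "1 \<le> a + b - k" "k - j \<le> a + b - k" using assms(4,8) by auto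
    have "real ((c choose a) * ((r * k) choose b) * (N choose (a + b + j - 2 * k)))
        \<le> real (t choose j) * (miss_factor r k t ^ r * escape_factor n k t) ^ (a + b - k)"
      by (rule deficit_term_le_excess_pow[OF ab assms(1-7,9)])
    also have "\<dots> \<le> real (t choose j) * \<theta> ^ (a + b - k)"
      using assms(10) miss_factor_nonneg escape_factor_nonneg
      by (intro mult_left_mono power_mono) simp_all
    also have "\<dots> \<le> real (t choose j) * (2 * \<theta> * (1/2) ^ (k - j))"
      using \<theta> assms(11) e by (intro mult_left_mono power_le_twice_half_pow) simp_all
    finally show ?thesis .
  qed
  then have "real (deficit_sum c N r k j m)
      \<le> (\<Sum>p\<in>deficit_pairs c r k j m. real (t choose j) * (2 * \<theta> * (1/2) ^ (k - j)))"
    unfolding deficit_sum_def of_nat_sum by (intro sum_mono) auto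
  then show ?thesis by simp
qed

lemma sum_power_le_one_plus:
  fixes x :: real
  assumes "0 \<le> x" "x \<le> 1"
  shows "(\<Sum>i\<le>n. x ^ i) \<le> 1 + real n * x"
proof (induction n)
  case (Suc n)
  have "x ^ Suc n \<le> x" using assms power_decreasing[of 1 "Suc n" x] by simp
  then show ?case using Suc by (simp add: algebra_simps)
qed simp

lemma deficit_sum_tight_le:
  fixes c k n r t N :: nat
  assumes "c \<le> t" "N \<le> n ^ 2" "2 \<le> r" "0 < k" "k < t" "t - k \<le> k * n ^ 2" "miss_factor r k t \<le> 1"
  shows "real (deficit_sum c N r k k 0)
    \<le> real (t choose k) * (1 + real k * miss_factor r k t) + real (deficit_sum c N r k k 1)"
proof -
  define f where "f = (\<lambda>(a, b). (c choose a) * ((r * k) choose b) * (N choose (a + b + k - 2 * k)))"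
  define R\<^sub>0 where "R\<^sub>0 = {p \<in> deficit_pairs c r k k 0. fst p + snd p = k}"
  have split: "deficit_pairs c r k k 0 = R\<^sub>0 \<union> deficit_pairs c r k k 1"
    "R\<^sub>0 \<inter> deficit_pairs c r k k 1 = {}"
    unfolding R\<^sub>0_def deficit_pairs_def by auto
  have "real (f p) \<le> real (t choose k) * miss_factor r k t ^ snd p" if "p \<in> R\<^sub>0" for p
    using that deficit_term_le[OF _ assms(1-3) order.refl assms(4-6), of "fst p" "snd p" 0]
    unfolding R\<^sub>0_def f_def by (auto split: prod.splits)
  then have "(\<Sum>p\<in>R\<^sub>0. real (f p)) \<le> (\<Sum>p\<in>R\<^sub>0. real (t choose k) * miss_factor r k t ^ snd p)"
    by (rule sum_mono)
  also have "\<dots> = real (t choose k) * (\<Sum>b\<in>snd ` R\<^sub>0. miss_factor r k t ^ b)"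
    by (subst sum.reindex) (auto simp: inj_on_def R\<^sub>0_def sum_distrib_left)
  also have "\<dots> \<le> real (t choose k) * (\<Sum>b\<le>k. miss_factor r k t ^ b)"
    using miss_factor_nonneg by (intro mult_left_mono sum_mono2) (auto simp: R\<^sub>0_def)
  also have "\<dots> \<le> real (t choose k) * (1 + real k * miss_factor r k t)"
    using sum_power_le_one_plus[OF miss_factor_nonneg assms(7)] by (intro mult_left_mono) auto
  finally have "(\<Sum>p\<in>R\<^sub>0. real (f p)) \<le> real (t choose k) * (1 + real k * miss_factor r k t)" .
  moreover have "real (deficit_sum c N r k k 0)
      = (\<Sum>p\<in>R\<^sub>0. real (f p)) + real (deficit_sum c N r k k 1)"
    unfolding deficit_sum_def f_def[symmetric] split(1) of_nat_sum
    by (rule sum.union_disjoint) (use split(2) finite_deficit_pairs in \<open>auto simp: R\<^sub>0_def\<close>)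
  ultimately show ?thesis by linarith
qed

lemma miss_factor_le_powr:
  assumes "2 * k \<le> t" "real k \<le> real t powr (2/7)" "0 < t"
  shows "miss_factor r k t \<le> 2 * real r * real t powr (-3/7)"
proof -
  have "real t / 2 \<le> real (t - k)" using assms(1) by simp
  moreover have "real k ^ 2 \<le> real t powr (4/7)"
    using power_mono[OF assms(2), of 2] assms(3) by (simp add: powr_power)
  ultimately have "real r * real k ^ 2 / real (t - k) \<le> real r * real t powr (4/7) / (real t / 2)"
    using assms(3) by (intro frac_le mult_left_mono) auto
  also have "\<dots> = 2 * real r * (real t powr (4/7) / real t powr 1)"
    using assms(3) by simp
  also have "real t powr (4/7) / real t powr 1 = real t powr (-3/7)"
    using powr_diff[of "real t" "4/7" 1] by simp
  finally show ?thesis unfolding miss_factor_def .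
qed

lemma escape_factor_le_pow:
  assumes "real n powr 0.99 < real t" "1 \<le> k" "k \<le> t"
  shows "escape_factor n k t \<le> real t ^ 4"
proof -
  have t: "1 \<le> real t" using assms(2,3) by simp
  have "(real n powr 0.99) powr (100/99) \<le> real t powr (100/99)"
    using assms(1) by (intro powr_mono2) auto
  then have "real n \<le> real t powr (100/99)" by (simp add: powr_powr)
  then have "real n ^ 2 \<le> (real t powr (100/99)) ^ 2" by (intro power_mono) auto
  also have "\<dots> = real t powr (200/99)" using t by (simp add: powr_power)
  also have "\<dots> \<le> real t ^ 3"
    using t powr_mono[of "200/99" 3 "real t"] by (simp add: powr_realpow)
  finally have n: "real n ^ 2 \<le> real t ^ 3" .
  have "real n ^ 2 * real (t - k) / real k \<le> real n ^ 2 * real (t - k) / 1"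
    using assms(2) by (intro divide_left_mono) auto
  also have "\<dots> \<le> real t ^ 3 * real t"
    using n by (simp add: mult_mono)
  finally have "real n ^ 2 * real (t - k) / real k \<le> real t ^ 3 * real t" .
  then show ?thesis unfolding escape_factor_def by (simp add: eval_nat_numeral)
qed

section \<open>The peeled configuration\<close>

text \<open>An upper bound for \<open>miss_factor r k t ^ r * escape_factor n k t\<close>, obtained from
  \<open>miss_factor r k t \<le> 2 r t\<^bsup>-3/7\<^esup> \<le> 1\<close>, \<open>r \<ge> 100\<close> and \<open>escape_factor n k t \<le> t\<^sup>4\<close>.\<close>
definition excess_bound :: "nat \<Rightarrow> real \<Rightarrow> real" where
  "excess_bound r x = (2 * real r) ^ 100 * x powr (-300/7) * x ^ 4"

text \<open>The hypotheses of \<open>lemma5p2\<close> that the proof uses, with the bound on \<open>k\<close> weakened to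
  \<open>k \<le> t\<^bsup>2/7\<^esup>\<close>.\<close>
locale peeled_configuration =
  fixes n t q k r :: nat and S :: "pperm set" and T :: "nat \<Rightarrow> pperm set" and A :: "nat \<Rightarrow> pperm"
  assumes r_ge: "100 \<le> r"
    and n_le: "real n powr 0.99 < real t"
    and partial_perms: "\<forall>P\<in>S. partial_perm n P"
    and intersecting: "t_intersecting t S"
    and peeling: "peeling t q S T"
    and k_pos: "1 \<le> k" and k_le: "k \<le> q - t" and k_le_powr: "real k \<le> real t powr (2/7)"
    and A_top: "\<forall>i\<in>{1..r}. A i \<in> Wfam t T k"
    and card_Inter_A: "int (card (\<Inter>i\<in>{1..r}. A i)) = int t - (int r - 2) * int k"
begin

lemma layer_t_intersecting: "t_intersecting t (T k)"
  using peeling_preserves[OF peeling intersecting k_le] by blast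

lemma layer_subset_grid: "\<Union>(T k) \<subseteq> {1..n} \<times> {1..n}"
  using peeling_preserves[OF peeling intersecting k_le] partial_perms partial_perm_subset_grid
  by blast

lemma A_in_top_layer: "i \<in> {1..r} \<Longrightarrow> A i \<in> T k \<and> card (A i) = t + k"
  using A_top unfolding Wfam_def by blast

sublocale tight_family "{1..r}" A t k
proof
  show "finite {1..r}" by simp
  show "2 \<le> card {1..r}" using r_ge by simp
  fix i l assume i: "i \<in> {1..r}"
  have "A i \<subseteq> {1..n} \<times> {1..n}" using A_in_top_layer[OF i] layer_subset_grid by blast
  then show "finite (A i)" by (rule finite_subset) simp
  show "card (A i) = t + k" using A_in_top_layer[OF i] by blast
  assume "l \<in> {1..r}"
  then show "t \<le> card (A i \<inter> A l)"
    using A_in_top_layer i layer_t_intersecting unfolding t_intersecting_def by blast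
next
  have "int (card (\<Inter>i\<in>{1..r}. A i) + (r - 2) * k) = int t"
    using card_Inter_A r_ge by (simp add: of_nat_diff)
  then have "card (\<Inter>i\<in>{1..r}. A i) + (r - 2) * k = t" by (simp only: of_nat_eq_iff)
  then show "card (\<Inter>i\<in>{1..r}. A i) + (card {1..r} - 2) * k = t" by simp
qed

lemma ninety_eight_k_le: "98 * k \<le> t"
proof -
  have "98 * k \<le> (r - 2) * k" using r_ge by (intro mult_right_mono) auto
  moreover have "(r - 2) * k \<le> t" using card_core by simp
  ultimately show ?thesis by linarith
qed

lemma layer_card_le:
  assumes "F \<subseteq> T k" "\<And>Y. Y \<in> F \<Longrightarrow> card Y = t + j \<and> m \<le> card (Y - support)"
  shows "card F \<le> deficit_sum (card core) (card ({1..n} \<times> {1..n} - support)) r k j m"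
proof -
  have "card F \<le> deficit_sum (card core) (card ({1..n} \<times> {1..n} - support)) (card {1..r}) k j m"
  proof (rule card_family_le)
    show "support \<subseteq> {1..n} \<times> {1..n}" using A_in_top_layer layer_subset_grid by blast
    fix Y assume Y: "Y \<in> F"
    then show "Y \<subseteq> {1..n} \<times> {1..n} \<and> card Y = t + j \<and>
        (\<forall>i\<in>{1..r}. t \<le> card (Y \<inter> A i)) \<and> m \<le> card (Y - support)"
      using assms A_in_top_layer layer_t_intersecting layer_subset_grid
      unfolding t_intersecting_def by blast
  qed simp
  then show ?thesis by simp
qed

lemma t_plus_k_le_square: "t + k \<le> n ^ 2"
proof -
  have "A 1 \<subseteq> {1..n} \<times> {1..n}" using A_in_top_layer[of 1] layer_subset_grid r_ge by auto
  then have "card (A 1) \<le> card ({1..n} \<times> {1..n})" by (intro card_mono) auto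
  then show ?thesis using card_member[of 1] r_ge unfolding card_grid by simp
qed

lemma card_grid_Diff_support_le: "card ({1..n} \<times> {1..n} - support) \<le> n ^ 2"
proof -
  have "card ({1..n} \<times> {1..n} - support) \<le> card ({1..n} \<times> {1..n})"
    by (intro card_mono) auto
  then show ?thesis unfolding card_grid .
qed

lemma k_less_t: "k < t"
  using ninety_eight_k_le k_pos by simp

lemma t_minus_k_le: "t - k \<le> k * n ^ 2"
proof -
  have "t - k \<le> 1 * n ^ 2" using t_plus_k_le_square by simp
  also have "\<dots> \<le> k * n ^ 2" using k_pos by (intro mult_right_mono) simp_all
  finally show ?thesis .
qed

lemma miss_factor_le: "miss_factor r k t \<le> 2 * real r * real t powr (-3/7)"
  using ninety_eight_k_le k_less_t by (intro miss_factor_le_powr k_le_powr) simp_all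

lemma excess_factor_le:
  assumes "2 * real r * real t powr (-3/7) \<le> 1"
  shows "miss_factor r k t ^ r * escape_factor n k t \<le> excess_bound r (real t)"
proof -
  have "miss_factor r k t ^ r \<le> (2 * real r * real t powr (-3/7)) ^ 100"
    using miss_factor_le assms r_ge miss_factor_nonneg
    by (meson order_trans power_decreasing power_mono)
  also have "\<dots> = (2 * real r) ^ 100 * real t powr (-300/7)"
    using k_less_t by (simp add: power_mult_distrib powr_power)
  finally show ?thesis
    unfolding excess_bound_def
    using escape_factor_le_pow[OF n_le k_pos] k_less_t escape_factor_nonneg
    by (intro mult_mono) auto
qed

lemma excess_sum_le:
  assumes "2 * real r * real t powr (-3/7) \<le> 1" "excess_bound r (real t) \<le> 1/2"
    and "j \<le> k" "j < k \<or> 0 < m"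
  shows "real (deficit_sum (card core) (card ({1..n} \<times> {1..n} - support)) r k j m)
    \<le> 8 * real r * real t ^ 2 * excess_bound r (real t) * real (t choose j) * (1/2) ^ (k - j)"
proof -
  have t: "1 \<le> t" using k_less_t by simp
  have miss: "miss_factor r k t \<le> 1"
    using miss_factor_le assms(1) by (rule order_trans)
  have r2: "2 \<le> r" and k0: "0 < k" using r_ge k_pos by simp_all
  have "real (deficit_sum (card core) (card ({1..n} \<times> {1..n} - support)) r k j m)
      \<le> real (card (deficit_pairs (card core) r k j m))
        * (real (t choose j) * (2 * excess_bound r (real t) * (1/2) ^ (k - j)))"
    by (rule deficit_sum_excess_le[OF card_core_le card_grid_Diff_support_le r2 assms(3) k0
      k_less_t t_minus_k_le assms(4) miss excess_factor_le[OF assms(1)] assms(2)])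
  also have "\<dots> \<le> real (4 * r * t ^ 2)
      * (real (t choose j) * (2 * excess_bound r (real t) * (1/2) ^ (k - j)))"
  proof (rule mult_right_mono)
    show "real (card (deficit_pairs (card core) r k j m)) \<le> real (4 * r * t ^ 2)"
      using card_deficit_pairs_le_square[OF card_core_le _ t, of k r j m] k_less_t r_ge
      by (simp only: of_nat_le_iff)
    show "0 \<le> real (t choose j) * (2 * excess_bound r (real t) * (1/2) ^ (k - j))"
      unfolding excess_bound_def by simp
  qed
  finally show ?thesis by (simp add: mult_ac)
qed


lemma lower_layers_card_le:
  assumes "2 * real r * real t powr (-3/7) \<le> 1" "excess_bound r (real t) \<le> 1/2"
    and "8 * real r * real t ^ 2 * excess_bound r (real t) \<le> real t powr (-0.1)"
    and j: "j < k"
  shows "real (card {X \<in> T k. card X = t + j})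
    \<le> real t powr (-0.1) * 2 powr (real j - real k) * real (t choose j)"
proof -
  have "card {X \<in> T k. card X = t + j}
      \<le> deficit_sum (card core) (card ({1..n} \<times> {1..n} - support)) r k j 0"
    by (rule layer_card_le) auto
  then have "real (card {X \<in> T k. card X = t + j})
      \<le> 8 * real r * real t ^ 2 * excess_bound r (real t) * real (t choose j) * (1/2) ^ (k - j)"
    using excess_sum_le[OF assms(1,2), of j 0] j by simp
  also have "\<dots> \<le> real t powr (-0.1) * real (t choose j) * (1/2) ^ (k - j)"
    using assms(3) by (intro mult_right_mono) auto
  also have "(1/2 :: real) ^ (k - j) = 2 powr (- real (k - j))"
    by (simp add: powr_minus_divide powr_realpow power_one_over)
  also have "- real (k - j) = real j - real k"
    using j by (simp add: of_nat_diff)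
  finally show ?thesis by (simp add: mult_ac)
qed

lemma top_layer_card_le:
  assumes "2 * real r * real t powr (-3/7) \<le> 1" "excess_bound r (real t) \<le> 1/2"
    and "8 * real r * real t ^ 2 * excess_bound r (real t) \<le> \<eta> / 2"
    and "2 * real r * real t powr (-1/7) \<le> \<eta> / 2"
  shows "real (card (Wfam t T k)) \<le> (1 + \<eta>) * real (t choose k) \<and>
    real (card {X \<in> Wfam t T k. \<not> X \<subseteq> support}) \<le> \<eta> * real (t choose k)"
proof -
  let ?D = "deficit_sum (card core) (card ({1..n} \<times> {1..n} - support)) r k k"
  have C: "0 \<le> real (t choose k)" by simp
  have "0 \<le> 2 * real r * real t powr (-1/7)" by simp
  then have eta: "0 \<le> \<eta>" using assms(4) by linarith
  have "real (?D 1) \<le> 8 * real r * real t ^ 2 * excess_bound r (real t) * real (t choose k)"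
    using excess_sum_le[OF assms(1,2), of k 1] by simp
  also have "\<dots> \<le> \<eta> / 2 * real (t choose k)"
    using assms(3) C by (rule mult_right_mono)
  finally have excess: "real (?D 1) \<le> \<eta> / 2 * real (t choose k)" .
  have "real k * miss_factor r k t \<le> real t powr (2/7) * (2 * real r * real t powr (-3/7))"
    using k_le_powr miss_factor_le miss_factor_nonneg by (intro mult_mono) auto
  also have "\<dots> = 2 * real r * real t powr (-1/7)"
    by (simp add: powr_add[symmetric])
  finally have "real k * miss_factor r k t \<le> \<eta> / 2"
    using assms(4) by (rule order_trans)
  then have k_rho: "real (t choose k) * (1 + real k * miss_factor r k t)
      \<le> real (t choose k) * (1 + \<eta> / 2)"
    using C by (intro mult_left_mono) auto
  have "real (?D 0) \<le> real (t choose k) * (1 + real k * miss_factor r k t) + real (?D 1)"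
  proof (rule deficit_sum_tight_le[OF card_core_le card_grid_Diff_support_le _ _
        k_less_t t_minus_k_le])
    show "miss_factor r k t \<le> 1" using miss_factor_le assms(1) by (rule order_trans)
  qed (use r_ge k_pos in auto)
  also have "\<dots> \<le> real (t choose k) * (1 + \<eta> / 2) + \<eta> / 2 * real (t choose k)"
    using k_rho excess by (rule add_mono)
  also have "\<dots> = (1 + \<eta>) * real (t choose k)" by (simp add: algebra_simps)
  finally have top: "real (?D 0) \<le> (1 + \<eta>) * real (t choose k)" .
  have "card (Wfam t T k) \<le> ?D 0"
    by (rule layer_card_le) (auto simp: Wfam_def)
  then have "real (card (Wfam t T k)) \<le> (1 + \<eta>) * real (t choose k)"
    using top by (meson of_nat_le_iff order_trans)
  moreover have "card {X \<in> Wfam t T k. \<not> X \<subseteq> support} \<le> ?D 1"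
  proof (rule layer_card_le)
    fix Y assume Y: "Y \<in> {X \<in> Wfam t T k. \<not> X \<subseteq> support}"
    then have "Y \<subseteq> {1..n} \<times> {1..n}" using layer_subset_grid unfolding Wfam_def by blast
    then have "finite Y" by (rule finite_subset) simp
    with Y show "card Y = t + k \<and> 1 \<le> card (Y - support)"
      unfolding Wfam_def by (auto simp: Suc_le_eq card_gt_0_iff)
  qed (auto simp: Wfam_def)
  then have "real (card {X \<in> Wfam t T k. \<not> X \<subseteq> support}) \<le> \<eta> / 2 * real (t choose k)"
    using excess by (meson of_nat_le_iff order_trans)
  moreover have "\<eta> / 2 * real (t choose k) \<le> \<eta> * real (t choose k)"
    using eta C by (intro mult_right_mono) auto
  ultimately show ?thesis by linarith
qed

end

lemma peeled_configurationI:
  assumes "0 < \<epsilon>" "100 \<le> r" "real n powr 0.99 < real t"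
    and "\<forall>P\<in>S. partial_perm n P \<and> card P \<le> q" "t_intersecting t S" "peeling t q S T"
    and "1 \<le> k" "k \<le> q - t" "real k \<le> real t powr (2/7 - \<epsilon>/2)"
    and "\<forall>i\<in>{1..r}. A i \<in> Wfam t T k"
    and "int (card (\<Inter>i\<in>{1..r}. A i)) = int t - (int r - 2) * int k"
  shows "peeled_configuration n t q k r S T A"
proof
  have "0 < t" using assms(7,9) by (cases "t = 0") auto
  then have "real t powr (2/7 - \<epsilon>/2) \<le> real t powr (2/7)"
    using assms(1) by (intro powr_mono) auto
  then show "real k \<le> real t powr (2/7)" using assms(9) by linarith
qed (use assms in auto)

theorem lemma5p2:
  fixes \<epsilon> :: real and r :: nat
  assumes eps_pos: "\<epsilon> > 0"
    and r_ge: "r \<ge> 100"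
    and r_cond: "(3 * real r - 1) / (real r - 1) * (2/7 - \<epsilon>/2) < 6/7 - \<epsilon>"
  shows
   "(\<exists>t0 k0 :: real. \<forall>(n::nat) (t::nat) (q::nat) (S::pperm set) (T::nat \<Rightarrow> pperm set)
        (k::nat) (A::nat \<Rightarrow> pperm).
      real n powr 0.99 < real t \<and> t < n \<and> t \<le> q \<and> q \<le> n \<and>
      (\<forall>P\<in>S. partial_perm n P \<and> card P \<le> q) \<and> t_intersecting t S \<and>
      peeling t q S T \<and>
      1 \<le> k \<and> k \<le> q - t \<and> real k \<le> real t powr (2/7 - \<epsilon>/2) \<and>
      (\<forall>i\<in>{1..r}. A i \<in> Wfam t T k) \<and>
      int (card (\<Inter>i\<in>{1..r}. A i)) = int t - (int r - 2) * int k \<and>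
      real t > t0 \<and> real k > k0
      \<longrightarrow> (\<forall>j<k. real (card {X \<in> T k. card X = t + j})
                    \<le> real t powr (-0.1) * 2 powr (real j - real k) * real (t choose j)))
    \<and>
    (\<forall>\<eta>::real. \<eta> > 0 \<longrightarrow>
     (\<exists>t0 k0 :: real. \<forall>(n::nat) (t::nat) (q::nat) (S::pperm set) (T::nat \<Rightarrow> pperm set)
        (k::nat) (A::nat \<Rightarrow> pperm).
      real n powr 0.99 < real t \<and> t < n \<and> t \<le> q \<and> q \<le> n \<and>
      (\<forall>P\<in>S. partial_perm n P \<and> card P \<le> q) \<and> t_intersecting t S \<and>
      peeling t q S T \<and>
      1 \<le> k \<and> k \<le> q - t \<and> real k \<le> real t powr (2/7 - \<epsilon>/2) \<and>
      (\<forall>i\<in>{1..r}. A i \<in> Wfam t T k) \<and>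
      int (card (\<Inter>i\<in>{1..r}. A i)) = int t - (int r - 2) * int k \<and>
      real t > t0 \<and> real k > k0
      \<longrightarrow> real (card (Wfam t T k)) \<le> (1 + \<eta>) * real (t choose k) \<and>
          real (card {X \<in> Wfam t T k. \<not> X \<subseteq> (\<Union>i\<in>{1..r}. A i)}) \<le> \<eta> * real (t choose k)))"
proof -
  have "eventually (\<lambda>x. 2 * real r * x powr (-3/7) \<le> 1 \<and> excess_bound r x \<le> 1/2 \<and>
      8 * real r * x ^ 2 * excess_bound r x \<le> x powr (-0.1)) at_top"
    unfolding excess_bound_def by (intro eventually_conj) real_asymp+
  then obtain t\<^sub>a where t\<^sub>a: "\<And>x. t\<^sub>a \<le> x \<Longrightarrow> 2 * real r * x powr (-3/7) \<le> 1 \<and>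
      excess_bound r x \<le> 1/2 \<and> 8 * real r * x ^ 2 * excess_bound r x \<le> x powr (-0.1)"
    unfolding eventually_at_top_linorder by blast
  let "?lower \<and> (\<forall>\<eta>. \<eta> > 0 \<longrightarrow> ?upper \<eta>)" = ?thesis
  have ?lower
    apply (rule exI[of _ t\<^sub>a], rule exI[of _ "0::real"], intro allI impI, elim conjE)
    apply (rule peeled_configuration.lower_layers_card_le[OF peeled_configurationI[OF eps_pos r_ge]])
    apply assumption+
    apply (metis t\<^sub>a less_imp_le)+
    done
  moreover have "?upper \<eta>" if "\<eta> > 0" for \<eta>
  proof -
    have "eventually (\<lambda>x. 2 * real r * x powr (-3/7) \<le> 1 \<and> excess_bound r x \<le> 1/2 \<and>
        8 * real r * x ^ 2 * excess_bound r x \<le> \<eta> / 2 \<and> 2 * real r * x powr (-1/7) \<le> \<eta> / 2) at_top"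
      using that unfolding excess_bound_def by (intro eventually_conj) real_asymp+
    then obtain t\<^sub>b where t\<^sub>b: "\<And>x. t\<^sub>b \<le> x \<Longrightarrow> 2 * real r * x powr (-3/7) \<le> 1 \<and>
        excess_bound r x \<le> 1/2 \<and> 8 * real r * x ^ 2 * excess_bound r x \<le> \<eta> / 2 \<and>
        2 * real r * x powr (-1/7) \<le> \<eta> / 2"
      unfolding eventually_at_top_linorder by blast
    show ?thesis
      apply (rule exI[of _ t\<^sub>b], rule exI[of _ "0::real"], intro allI impI, elim conjE)
      apply (rule peeled_configuration.top_layer_card_le[OF peeled_configurationI[OF eps_pos r_ge]])
      apply assumption+
      apply (metis t\<^sub>b less_imp_le)+
      done
  qed
  ultimately show ?thesis by blast
qed

end
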